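(* On an event of probability one, the following holds. Let $\mathfrak h$ be an eternal solution, let $s\in\mathbb R$, and let $\gamma:[s,\infty)\to\mathbb R^2$ be an $\mathfrak h$-geodesic. Then for all $t>r\ge s$, the restriction of $\gamma$ to $[r,t]$ is a geodesic from $\gamma(r)$ to $\gamma(t)$. Consequently, $\gamma$ is continuous.
   Context: $\mathcal L$ is the directed landscape (random continuous field $\{\mathcal L(x,s;y,t):s<t\}$ of Dauvergne–Ortmann–Virág). Almost surely it satisfies $\mathcal L(x,s;y,t)=\sup_z(\mathcal L(x,s;z,r)+\mathcal L(z,r;y,t))$ for $s<r<t$. An eternal solution is a function $\mathfrak h:\mathbb R^2\to\mathbb R$ with $\mathfrak h(x,s)=\sup_y\{\mathcal L(x,s;y,t)+\mathfrak h(y,t)\}$ for all $x$ and $s<t$. A space-time path on an interval $J$ is a map $\gamma:J\to\mathbb R^2$ whose second coordinate at time $t$ is $t$. The passage time of $\gamma:[r,t]\to\mathbb R^2$ is the infimum over partitions $r=r_0<\dots<r_k=t$ of $\sum_i\mathcal L(\gamma(r_{i-1});\gamma(r_i))$. A geodesic from $p$ to $q$ is a space-time path from $p$ to $q$ whose passage time equals $\mathcal L(p;q)$. Any path with finite passage time is continuous. An $\mathfrak h$-geodesic is a space-time path $\gamma:[s,\infty)\to\mathbb R^2$ with $\mathcal L(\gamma(r);\gamma(t))=\mathfrak h(\gamma(r))-\mathfrak h(\gamma(t))$ for all $t>r\ge s$. *)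

theory Defs
  imports "HOL-Probability.Probability"
begin

text \<open>Space-time points are pairs (x, t) :: real \<times> real (space, time).
  A realisation of the directed landscape is a function
  L :: real \<times> real \<Rightarrow> real \<times> real \<Rightarrow> real, where L (x,s) (y,t) stands for
  L(x,s;y,t); only its values for s < t are meaningful.\<close>

type_synonym landscape = "real \<times> real \<Rightarrow> real \<times> real \<Rightarrow> real"

definition metric_composition :: "landscape \<Rightarrow> bool" where
  "metric_composition L \<longleftrightarrow>
     (\<forall>x y s r t. s < r \<longrightarrow> r < t \<longrightarrow>
        ereal (L (x,s) (y,t)) = (SUP z. ereal (L (x,s) (z,r) + L (z,r) (y,t))))"

definition landscape_continuous :: "landscape \<Rightarrow> bool" where
  "landscape_continuous L \<longleftrightarrow>
     continuous_on {pq :: (real\<times>real)\<times>(real\<times>real). snd (fst pq) < snd (snd pq)}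
       (\<lambda>(p,q). L p q)"

definition eternal_solution :: "landscape \<Rightarrow> (real \<times> real \<Rightarrow> real) \<Rightarrow> bool" where
  "eternal_solution L h \<longleftrightarrow>
     (\<forall>x s t. s < t \<longrightarrow> ereal (h (x,s)) = (SUP y. ereal (L (x,s) (y,t) + h (y,t))))"

definition spacetime_path :: "real set \<Rightarrow> (real \<Rightarrow> real \<times> real) \<Rightarrow> bool" where
  "spacetime_path J \<gamma> \<longleftrightarrow> (\<forall>t\<in>J. snd (\<gamma> t) = t)"

definition partition_of :: "real \<Rightarrow> real \<Rightarrow> nat \<Rightarrow> (nat \<Rightarrow> real) \<Rightarrow> bool" where
  "partition_of r t k p \<longleftrightarrow> 0 < k \<and> p 0 = r \<and> p k = t \<and> (\<forall>i<k. p i < p (Suc i))"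

definition passage_time :: "landscape \<Rightarrow> (real \<Rightarrow> real \<times> real) \<Rightarrow> real \<Rightarrow> real \<Rightarrow> ereal" where
  "passage_time L \<gamma> r t =
     (INF kp \<in> {(k,p). partition_of r t k p}.
        ereal (\<Sum>i<fst kp. L (\<gamma> (snd kp i)) (\<gamma> (snd kp (Suc i)))))"

definition geodesic_on :: "landscape \<Rightarrow> (real \<Rightarrow> real \<times> real) \<Rightarrow> real \<Rightarrow> real \<Rightarrow> bool" where
  "geodesic_on L \<gamma> r t \<longleftrightarrow>
     r < t \<and> spacetime_path {r..t} \<gamma> \<and> passage_time L \<gamma> r t = ereal (L (\<gamma> r) (\<gamma> t))"

definition h_geodesic :: "landscape \<Rightarrow> (real \<times> real \<Rightarrow> real) \<Rightarrow> real \<Rightarrow> (real \<Rightarrow> real \<times> real) \<Rightarrow> bool" where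
  "h_geodesic L h s \<gamma> \<longleftrightarrow>
     spacetime_path {s..} \<gamma> \<and>
     (\<forall>r t. s \<le> r \<longrightarrow> r < t \<longrightarrow> L (\<gamma> r) (\<gamma> t) = h (\<gamma> r) - h (\<gamma> t))"

text \<open>Almost-sure property from the context: any path with finite passage time is continuous.\<close>
definition finite_passage_continuous :: "landscape \<Rightarrow> bool" where
  "finite_passage_continuous L \<longleftrightarrow>
     (\<forall>\<gamma> r t. r < t \<longrightarrow> spacetime_path {r..t} \<gamma> \<longrightarrow> \<bar>passage_time L \<gamma> r t\<bar> \<noteq> \<infinity>
        \<longrightarrow> continuous_on {r..t} \<gamma>)"

end

theory Submission
  imports Defs
begin

text \<open>Along an h-geodesic the landscape between two of its points is the drop of h, so the
  sum over any partition of [r,t] telescopes to L(\<gamma> r; \<gamma> t): the infimum defining the passage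
  time is taken over a constant, and \<gamma> is a geodesic on [r,t]. This finite passage time makes
  \<gamma> continuous on every [s,t], hence on [s,\<infinity>).\<close>

lemma partition_of_ge_start:
  assumes "partition_of r t k p" "i \<le> k"
  shows "r \<le> p i"
  using assms(2)
proof (induction i)
  case 0
  then show ?case using assms(1) by (simp add: partition_of_def)
next
  case (Suc i)
  then have "r \<le> p i" by simp
  also have "p i < p (Suc i)" using assms(1) Suc.prems by (simp add: partition_of_def)
  finally show ?case by simp
qed

lemma partition_sum_telescope:
  fixes f :: "real \<Rightarrow> 'a::ab_group_add"
  assumes "partition_of r t k p"
    and drop: "\<And>a b. r \<le> a \<Longrightarrow> a < b \<Longrightarrow> L (\<gamma> a) (\<gamma> b) = f a - f b"
  shows "(\<Sum>i<k. L (\<gamma> (p i)) (\<gamma> (p (Suc i)))) = f r - f t"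
proof -
  have "(\<Sum>i<k. L (\<gamma> (p i)) (\<gamma> (p (Suc i)))) = (\<Sum>i<k. f (p i) - f (p (Suc i)))"
  proof (rule sum.cong)
    fix i assume "i \<in> {..<k}"
    then have "r \<le> p i" "p i < p (Suc i)"
      using assms(1) partition_of_ge_start[OF assms(1), of i] by (auto simp: partition_of_def)
    then show "L (\<gamma> (p i)) (\<gamma> (p (Suc i))) = f (p i) - f (p (Suc i))" by (rule drop)
  qed simp
  also have "\<dots> = f (p 0) - f (p k)" using sum_lessThan_telescope'[of "f \<circ> p"] by simp
  finally show ?thesis using assms(1) by (simp add: partition_of_def)
qed

lemma passage_time_eq_if_partition_sums_eq:
  assumes "r < t"
    and "\<And>k p. partition_of r t k p \<Longrightarrow> (\<Sum>i<k. L (\<gamma> (p i)) (\<gamma> (p (Suc i)))) = c"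
  shows "passage_time L \<gamma> r t = ereal c"
proof -
  have "partition_of r t 1 (\<lambda>i. if i = 0 then r else t)"
    using assms(1) by (simp add: partition_of_def)
  then have "{(k,p). partition_of r t k p} \<noteq> {}" by blast
  then show ?thesis
    unfolding passage_time_def using assms(2) by (subst INF_cong[OF refl, of _ _ "\<lambda>_. ereal c"]) auto
qed

lemma h_geodesic_geodesic_on:
  assumes "h_geodesic L h s \<gamma>" "s \<le> r" "r < t"
  shows "geodesic_on L \<gamma> r t"
proof -
  have drop: "L (\<gamma> a) (\<gamma> b) = (h \<circ> \<gamma>) a - (h \<circ> \<gamma>) b" if "r \<le> a" "a < b" for a b
    using assms(1,2) that unfolding h_geodesic_def by auto
  have "passage_time L \<gamma> r t = ereal (h (\<gamma> r) - h (\<gamma> t))"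
    using assms(3) partition_sum_telescope[where L = L and \<gamma> = \<gamma> and f = "h \<circ> \<gamma>", OF _ drop]
    by (intro passage_time_eq_if_partition_sums_eq) auto
  moreover have "spacetime_path {r..t} \<gamma>"
    using assms(1,2) unfolding h_geodesic_def spacetime_path_def by auto
  ultimately show ?thesis using assms(3) drop[of r t] by (simp add: geodesic_on_def)
qed

lemma continuous_on_atLeast_if_continuous_on_intervals:
  fixes f :: "real \<Rightarrow> 'a::topological_space"
  assumes "\<And>t. s < t \<Longrightarrow> continuous_on {s..t} f"
  shows "continuous_on {s..} f"
  unfolding continuous_on_def
proof
  fix x assume x: "x \<in> {s..}"
  have "(f \<longlongrightarrow> f x) (at x within {s..x+1})"
    using assms[of "x+1"] x unfolding continuous_on_def by auto
  moreover have "at x within {s..} = at x within {s..x+1}"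
    by (rule at_within_nhd[of _ "{..<x+1}"]) auto
  ultimately show "(f \<longlongrightarrow> f x) (at x within {s..})" by simp
qed

lemma h_geodesic_continuous:
  assumes "finite_passage_continuous L" "h_geodesic L h s \<gamma>"
  shows "continuous_on {s..} \<gamma>"
proof (rule continuous_on_atLeast_if_continuous_on_intervals)
  fix t assume "s < t"
  then have "geodesic_on L \<gamma> s t" using h_geodesic_geodesic_on[OF assms(2)] by simp
  then show "continuous_on {s..t} \<gamma>"
    using assms(1) unfolding finite_passage_continuous_def geodesic_on_def by simp
qed

theorem lemma3p4:
  fixes M :: "'w measure" and \<L> :: "'w \<Rightarrow> landscape"
  assumes "prob_space M"
    and "AE \<omega> in M. landscape_continuous (\<L> \<omega>)"
    and "AE \<omega> in M. metric_composition (\<L> \<omega>)"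
    and "AE \<omega> in M. finite_passage_continuous (\<L> \<omega>)"
  shows "AE \<omega> in M. \<forall>h s \<gamma>. eternal_solution (\<L> \<omega>) h \<longrightarrow> h_geodesic (\<L> \<omega>) h s \<gamma> \<longrightarrow>
           (\<forall>r t. s \<le> r \<longrightarrow> r < t \<longrightarrow> geodesic_on (\<L> \<omega>) \<gamma> r t) \<and> continuous_on {s..} \<gamma>"
  using assms(4)
  by eventually_elim (use h_geodesic_geodesic_on h_geodesic_continuous in blast)

end
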